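(* Assume condition (C) holds, so that $f$ is well defined. If $f(i)>0$ for some $i\in\mathbb Z_+$, then $f(j)>0$ for every $j\in\mathbb Z_+$.
   Context: Let $\mathbb Z_+=\{0,1,2,\dots\}$. Let $Q$ be a nonnegative transition kernel on $\mathbb Z_+$: $Q(i,j)\ge 0$ and $0<Q(i,\mathbb Z_+):=\sum_{j\ge0}Q(i,j)<\infty$ for every $i$, and $Q$ is irreducible (for all $i,j$ there is $n\ge1$ with $Q^n(i,j)>0$). Let $P(i,j):=Q(i,j)/Q(i,\mathbb Z_+)$ and let $(X_n)_{n\ge0}$ be a Markov chain on $\mathbb Z_+$ with transition matrix $P$; $\mathbb P_i,\mathbb E_i$ denote probability and expectation given $X_0=i$. Condition (C): for every $i$, $\mathbb E_i\prod_{n=0}^\infty \max(Q(X_n,\mathbb Z_+),1)<\infty$. Under (C) define $f(i):=\mathbb E_i\prod_{n=0}^\infty Q(X_n,\mathbb Z_+)\in[0,\infty)$. *)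

theory Defs
  imports "HOL-Probability.Probability"
begin

definition rowmass :: "(nat \<Rightarrow> nat \<Rightarrow> real) \<Rightarrow> nat \<Rightarrow> real" where
  "rowmass Q i = (\<Sum>j. Q i j)"

definition nonneg_kernel :: "(nat \<Rightarrow> nat \<Rightarrow> real) \<Rightarrow> bool" where
  "nonneg_kernel Q \<longleftrightarrow> (\<forall>i j. 0 \<le> Q i j) \<and> (\<forall>i. summable (Q i) \<and> 0 < rowmass Q i)"

text \<open>Matrix powers of Q, computed in [0,\<infinity>] so that infinite sums are always meaningful.\<close>
fun kpow :: "(nat \<Rightarrow> nat \<Rightarrow> real) \<Rightarrow> nat \<Rightarrow> nat \<Rightarrow> nat \<Rightarrow> ennreal" where
  "kpow Q 0 i j = (if i = j then 1 else 0)"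
| "kpow Q (Suc n) i j = (\<Sum>k. kpow Q n i k * ennreal (Q k j))"

definition irreducible_kernel :: "(nat \<Rightarrow> nat \<Rightarrow> real) \<Rightarrow> bool" where
  "irreducible_kernel Q \<longleftrightarrow> (\<forall>i j. \<exists>n\<ge>1. kpow Q n i j > 0)"

definition stoch :: "(nat \<Rightarrow> nat \<Rightarrow> real) \<Rightarrow> nat \<Rightarrow> nat \<Rightarrow> real" where
  "stoch Q i j = Q i j / rowmass Q i"

definition markov_chain_from ::
  "'a measure \<Rightarrow> (nat \<Rightarrow> 'a \<Rightarrow> nat) \<Rightarrow> (nat \<Rightarrow> nat \<Rightarrow> real) \<Rightarrow> nat \<Rightarrow> bool" where
  "markov_chain_from M X P i \<longleftrightarrow> prob_space M \<and>
     (\<forall>n. X n \<in> measurable M (count_space UNIV)) \<and>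
     (\<forall>n xs. measure M {\<omega> \<in> space M. \<forall>k\<le>n. X k \<omega> = xs k} =
        (if xs 0 = i then (\<Prod>k<n. P (xs k) (xs (Suc k))) else 0))"

definition infprod :: "(nat \<Rightarrow> real) \<Rightarrow> ennreal" where
  "infprod g = lim (\<lambda>N. \<Prod>n<N. ennreal (g n))"

definition condC ::
  "(nat \<Rightarrow> nat \<Rightarrow> real) \<Rightarrow> (nat \<Rightarrow> 'a measure) \<Rightarrow> (nat \<Rightarrow> nat \<Rightarrow> 'a \<Rightarrow> nat) \<Rightarrow> bool" where
  "condC Q M X \<longleftrightarrow> (\<forall>i. (\<integral>\<^sup>+\<omega>. infprod (\<lambda>n. max (rowmass Q (X i n \<omega>)) 1) \<partial>M i) < \<infinity>)"

definition fval ::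
  "(nat \<Rightarrow> nat \<Rightarrow> real) \<Rightarrow> (nat \<Rightarrow> 'a measure) \<Rightarrow> (nat \<Rightarrow> nat \<Rightarrow> 'a \<Rightarrow> nat) \<Rightarrow> nat \<Rightarrow> ennreal" where
  "fval Q M X i = (\<integral>\<^sup>+\<omega>. infprod (\<lambda>n. rowmass Q (X i n \<omega>)) \<partial>M i)"

end

theory Submission imports Defs begin

(*
  Write r = Q(\<cdot>, Z_+) and split every factor as r = max(r,1) \<cdot> min(r,1).
  Along a path x the partial products of max(r,1) increase to U(x) \<ge> 1 and those of
  min(r,1) decrease to L(x) \<in> [0,1]; whenever U(x) < \<infinity> the infinite product of r
  along x equals U(x) \<cdot> L(x).  Condition (C) says E_l U < \<infinity>, so U < \<infinity> almost
  surely and hence  f(l) = 0  iff  E_l L = 0  iff  inf_N E_l L_N = 0  (monotone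
  convergence for the bounded decreasing sequence L_N).
  Irreducibility gives a path s from j to i with positive P-weight c.  By the Markov
  property at time n, restricting the chain started at j to the event "X_0..X_n = s"
  and looking at the following window of states gives c times the law of the chain
  started at i.  On that event the first n lower factors equal L_n(s) > 0, so
  E_j L_N \<ge> L_n(s) \<cdot> c \<cdot> E_i L_N  for all N, whence f(i) > 0 forces f(j) > 0.
  The file follows this outline: products along paths, the zero criterion for f,
  the Markov transfer along a fixed path, paths from irreducibility, the theorem.
*)

section \<open>Upper and lower partial products along a path\<close>

definition upper_prod :: "(nat \<Rightarrow> real) \<Rightarrow> (nat \<Rightarrow> nat) \<Rightarrow> nat \<Rightarrow> ennreal" where
  "upper_prod r x N = (\<Prod>k<N. ennreal (max (r (x k)) 1))"

definition lower_prod :: "(nat \<Rightarrow> real) \<Rightarrow> (nat \<Rightarrow> nat) \<Rightarrow> nat \<Rightarrow> ennreal" where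
  "lower_prod r x N = (\<Prod>k<N. ennreal (min (r (x k)) 1))"

lemma upper_prod_incseq: "incseq (upper_prod r x)"
proof (rule incseq_SucI)
  fix N
  have "upper_prod r x N * 1 \<le> upper_prod r x N * ennreal (max (r (x N)) 1)"
    by (intro mult_left_mono) auto
  then show "upper_prod r x N \<le> upper_prod r x (Suc N)" by (simp add: upper_prod_def)
qed

lemma lower_prod_decseq: "decseq (lower_prod r x)"
proof (rule decseq_SucI)
  fix N
  have "lower_prod r x N * ennreal (min (r (x N)) 1) \<le> lower_prod r x N * 1"
    by (intro mult_left_mono) auto
  then show "lower_prod r x (Suc N) \<le> lower_prod r x N" by (simp add: lower_prod_def)
qed

lemma lower_prod_le_1: "lower_prod r x N \<le> 1"
  unfolding lower_prod_def by (rule prod_le_1) auto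

lemma lower_prod_add: "lower_prod r x (n + K) = lower_prod r x n * lower_prod r (\<lambda>k. x (n + k)) K"
  unfolding lower_prod_def by (induction K) (auto simp: mult.assoc)

lemma lower_prod_pos: "(\<And>k. 0 < r k) \<Longrightarrow> lower_prod r x N \<noteq> 0"
  unfolding lower_prod_def by (auto simp: ennreal_eq_0_iff not_le)

lemma infprod_max_eq_SUP: "infprod (\<lambda>n. max (r (x n)) 1) = (SUP N. upper_prod r x N)"
  unfolding infprod_def upper_prod_def[symmetric]
  by (rule limI, rule LIMSEQ_SUP, rule upper_prod_incseq)

lemma infprod_eq_SUP_upper_times_INF_lower:
  assumes nn: "\<And>k. 0 \<le> r k" and fin: "(SUP N. upper_prod r x N) \<noteq> \<infinity>"
  shows "infprod (\<lambda>n. r (x n)) = (SUP N. upper_prod r x N) * (INF N. lower_prod r x N)"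
proof -
  have factor: "ennreal (r (x n)) = ennreal (max (r (x n)) 1) * ennreal (min (r (x n)) 1)" for n
    using nn[of "x n"] by (cases "r (x n) \<le> 1") (auto simp: max_def min_def ennreal_mult[symmetric])
  have split: "(\<Prod>n<N. ennreal (r (x n))) = upper_prod r x N * lower_prod r x N" for N
    by (simp add: factor upper_prod_def lower_prod_def prod.distrib)
  have "(INF N. lower_prod r x N) \<le> 1"
    by (rule INF_lower2[of 0]) (auto simp: lower_prod_le_1)
  then have "(INF N. lower_prod r x N) \<noteq> \<infinity>"
    using le_less_trans[OF _ ennreal_one_less_top] unfolding infinity_ennreal_def
    by (simp only: less_top)
  with fin have "(\<lambda>N. upper_prod r x N * lower_prod r x N)
      \<longlonglongrightarrow> (SUP N. upper_prod r x N) * (INF N. lower_prod r x N)"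
    by (intro tendsto_mult_ennreal LIMSEQ_SUP[OF upper_prod_incseq] LIMSEQ_INF[OF lower_prod_decseq])
       auto
  then show ?thesis unfolding infprod_def split by (rule limI)
qed

section \<open>When does the expected infinite product vanish?\<close>

lemma measurable_compose_count_space:
  assumes "Y \<in> measurable M (count_space UNIV)" "g \<in> UNIV \<rightarrow> space N"
  shows "(\<lambda>\<omega>. g (Y \<omega>)) \<in> measurable M N"
  using measurable_compose[OF assms(1), of g N] assms(2) by simp

lemma partial_prods_measurable:
  assumes "\<And>k. Y k \<in> measurable M (count_space UNIV)"
  shows "(\<lambda>\<omega>. upper_prod r (\<lambda>n. Y n \<omega>) N) \<in> borel_measurable M"
    and "(\<lambda>\<omega>. lower_prod r (\<lambda>n. Y n \<omega>) N) \<in> borel_measurable M"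
  unfolding upper_prod_def lower_prod_def
  by (intro borel_measurable_prod_ennreal measurable_compose_count_space[OF assms]; simp)+

text \<open>Under an integrability condition of type (C), the expected infinite product of r
  along a random path vanishes iff the expected limit of the lower products does: the
  upper products are at least 1 and almost surely finite.\<close>
lemma integral_infprod_eq_0_iff:
  assumes Y: "\<And>k. Y k \<in> measurable M (count_space UNIV)"
    and nn: "\<And>k. 0 \<le> r k"
    and C: "(\<integral>\<^sup>+\<omega>. infprod (\<lambda>n. max (r (Y n \<omega>)) 1) \<partial>M) < \<infinity>"
  shows "(\<integral>\<^sup>+\<omega>. infprod (\<lambda>n. r (Y n \<omega>)) \<partial>M) = 0 \<longleftrightarrow>
         (\<integral>\<^sup>+\<omega>. (INF N. lower_prod r (\<lambda>n. Y n \<omega>) N) \<partial>M) = 0"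
proof -
  note [measurable] = partial_prods_measurable[OF Y]
  define U where "U \<omega> = (SUP N. upper_prod r (\<lambda>n. Y n \<omega>) N)" for \<omega>
  define L where "L \<omega> = (INF N. lower_prod r (\<lambda>n. Y n \<omega>) N)" for \<omega>
  have [measurable]: "U \<in> borel_measurable M" "L \<in> borel_measurable M"
    unfolding U_def L_def by measurable
  have "infprod (\<lambda>n. max (r (Y n \<omega>)) 1) = U \<omega>" for \<omega>
    using infprod_max_eq_SUP[of r "\<lambda>n. Y n \<omega>"] by (simp add: U_def)
  then have "(\<integral>\<^sup>+\<omega>. U \<omega> \<partial>M) \<noteq> \<infinity>"
    using C by (simp add: less_top)
  then have "AE \<omega> in M. U \<omega> \<noteq> \<infinity>"
    by (rule nn_integral_PInf_AE[rotated]) measurable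
  moreover have "infprod (\<lambda>n. r (Y n \<omega>)) = U \<omega> * L \<omega>" if "U \<omega> \<noteq> \<infinity>" for \<omega>
    using infprod_eq_SUP_upper_times_INF_lower[OF nn that[unfolded U_def]]
    by (simp only: U_def L_def)
  ultimately have "(\<integral>\<^sup>+\<omega>. infprod (\<lambda>n. r (Y n \<omega>)) \<partial>M) = (\<integral>\<^sup>+\<omega>. U \<omega> * L \<omega> \<partial>M)"
    by (intro nn_integral_cong_AE) (auto elim!: eventually_mono)
  moreover have "U \<omega> * L \<omega> = 0 \<longleftrightarrow> L \<omega> = 0" for \<omega>
  proof -
    have "1 \<le> U \<omega>" unfolding U_def by (rule SUP_upper2[of 0]) (auto simp: upper_prod_def)
    then show ?thesis by (auto simp: mult_eq_0_iff)
  qed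
  then have "(\<integral>\<^sup>+\<omega>. U \<omega> * L \<omega> \<partial>M) = 0 \<longleftrightarrow> (AE \<omega> in M. L \<omega> = 0)"
    by (subst nn_integral_0_iff_AE) auto
  moreover have "(AE \<omega> in M. L \<omega> = 0) \<longleftrightarrow> (\<integral>\<^sup>+\<omega>. L \<omega> \<partial>M) = 0"
    by (subst nn_integral_0_iff_AE) auto
  ultimately show ?thesis by (simp add: L_def)
qed

text \<open>Monotone convergence for the lower products, which are bounded by 1.\<close>
lemma integral_INF_lower_prod:
  assumes "prob_space M" and Y: "\<And>k. Y k \<in> measurable M (count_space UNIV)"
  shows "(\<integral>\<^sup>+\<omega>. (INF N. lower_prod r (\<lambda>n. Y n \<omega>) N) \<partial>M)
       = (INF N. \<integral>\<^sup>+\<omega>. lower_prod r (\<lambda>n. Y n \<omega>) N \<partial>M)"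
proof (rule nn_integral_monotone_convergence_INF_AE')
  show "AE \<omega> in M. lower_prod r (\<lambda>n. Y n \<omega>) (Suc N) \<le> lower_prod r (\<lambda>n. Y n \<omega>) N" for N
    using lower_prod_decseq[of r] by (auto simp: decseq_Suc_iff)
  show "(\<lambda>\<omega>. lower_prod r (\<lambda>n. Y n \<omega>) N) \<in> borel_measurable M" for N
    by (rule partial_prods_measurable(2)[OF Y])
  show "(\<integral>\<^sup>+\<omega>. lower_prod r (\<lambda>n. Y n \<omega>) 0 \<partial>M) < \<infinity>"
    using \<open>prob_space M\<close> by (simp add: lower_prod_def prob_space.emeasure_space_1)
qed

lemma fval_eq_0_iff:
  assumes kernel: "nonneg_kernel Q"
    and chain: "markov_chain_from (M l) (X l) P l"
    and C: "condC Q M X"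
  shows "fval Q M X l = 0 \<longleftrightarrow>
         (INF N. \<integral>\<^sup>+\<omega>. lower_prod (rowmass Q) (\<lambda>n. X l n \<omega>) N \<partial>M l) = 0"
proof -
  have Y: "\<And>k. X l k \<in> measurable (M l) (count_space UNIV)" and "prob_space (M l)"
    using chain unfolding markov_chain_from_def by auto
  have "\<And>k. 0 \<le> rowmass Q k" using kernel unfolding nonneg_kernel_def by (auto intro: less_imp_le)
  then show ?thesis
    unfolding fval_def integral_INF_lower_prod[OF \<open>prob_space (M l)\<close> Y, symmetric]
    by (rule integral_infprod_eq_0_iff[OF Y]) (use C in \<open>simp add: condC_def\<close>)
qed

section \<open>The Markov property along a fixed initial path\<close>

definition window :: "(nat \<Rightarrow> 'a \<Rightarrow> nat) \<Rightarrow> nat \<Rightarrow> nat \<Rightarrow> 'a \<Rightarrow> nat list" where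
  "window Y n N \<omega> = map (\<lambda>k. Y (n + k) \<omega>) [0..<Suc N]"

lemma window_eq_iff:
  "window Y n N \<omega> = ys \<longleftrightarrow> length ys = Suc N \<and> (\<forall>k\<le>N. Y (n + k) \<omega> = ys ! k)"
  by (auto simp: window_def list_eq_iff_nth_eq less_Suc_eq_le simp del: upt_Suc)

lemma length_window: "length (window Y n N \<omega>) = Suc N"
  by (simp add: window_def del: upt_Suc)

lemma nth_window: "k \<le> N \<Longrightarrow> window Y n N \<omega> ! k = Y (n + k) \<omega>"
  by (simp add: window_def nth_map_upt del: upt_Suc)

lemma window_measurable:
  assumes Y: "\<And>k. Y k \<in> measurable M (count_space UNIV)"
  shows "window Y n N \<in> measurable M (count_space UNIV)"
proof (rule measurable_count_space_eq2_countable[THEN iffD2], intro conjI ballI)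
  fix ys :: "nat list"
  note [measurable] = Y
  have "window Y n N -` {ys} \<inter> space M =
      {\<omega>\<in>space M. length ys = Suc N \<and> (\<forall>k\<le>N. Y (n + k) \<omega> = ys ! k)}"
    by (auto simp: window_eq_iff length_window nth_window)
  also have "\<dots> \<in> sets M" by measurable
  finally show "window Y n N -` {ys} \<inter> space M \<in> sets M" .
qed auto

lemma prod_lessThan_add:
  "(\<Prod>k<n + N. f k) = (\<Prod>k<n. f k) * (\<Prod>k<N. f (n + k))" for f :: "nat \<Rightarrow> real"
  by (induction N) (auto simp: mult.assoc)

lemma markov_cylinder_measure:
  assumes mj: "markov_chain_from Mj Yj P j" and mi: "markov_chain_from Mi Yi P i"
    and s0: "s 0 = j" and sn: "s n = i"
  shows "measure Mj {\<omega>\<in>space Mj. (\<forall>k\<le>n. Yj k \<omega> = s k) \<and> window Yj n N \<omega> = ys}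
       = (\<Prod>k<n. P (s k) (s (Suc k))) * measure Mi {\<omega>\<in>space Mi. window Yi 0 N \<omega> = ys}"
proof (cases "length ys = Suc N \<and> ys ! 0 = i")
  case False
  then have empty: "{\<omega>\<in>space Mj. (\<forall>k\<le>n. Yj k \<omega> = s k) \<and> window Yj n N \<omega> = ys} = {}"
    using sn by (auto simp: window_eq_iff)
  have zero: "measure Mi {\<omega>\<in>space Mi. window Yi 0 N \<omega> = ys} = 0"
  proof (cases "length ys = Suc N")
    case True
    then have "{\<omega>\<in>space Mi. window Yi 0 N \<omega> = ys} = {\<omega>\<in>space Mi. \<forall>k\<le>N. Yi k \<omega> = ys ! k}"
      by (simp add: window_eq_iff)
    with mi False True show ?thesis unfolding markov_chain_from_def by auto
  qed (simp add: window_eq_iff)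
  show ?thesis unfolding empty zero by simp
next
  case True
  define xs where "xs k = (if k \<le> n then s k else ys ! (k - n))" for k
  have "{\<omega>\<in>space Mj. (\<forall>k\<le>n. Yj k \<omega> = s k) \<and> window Yj n N \<omega> = ys}
      = {\<omega>\<in>space Mj. \<forall>k\<le>n + N. Yj k \<omega> = xs k}"
  proof (intro Collect_cong conj_cong refl iffI)
    fix \<omega> assume prefix: "(\<forall>k\<le>n. Yj k \<omega> = s k) \<and> window Yj n N \<omega> = ys"
    show "\<forall>k\<le>n + N. Yj k \<omega> = xs k"
    proof (intro allI impI)
      fix k assume "k \<le> n + N"
      then show "Yj k \<omega> = xs k"
        using prefix True
        by (cases "k \<le> n") (auto simp: xs_def window_eq_iff dest: spec[of _ "k - n"])
    qed
  next
    fix \<omega> assume path: "\<forall>k\<le>n + N. Yj k \<omega> = xs k"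
    have "Yj (n + k) \<omega> = ys ! k" if "k \<le> N" for k
      using path[rule_format, of "n + k"] that True sn by (cases k) (auto simp: xs_def)
    then have "window Yj n N \<omega> = ys" using True by (simp add: window_eq_iff)
    with path show "(\<forall>k\<le>n. Yj k \<omega> = s k) \<and> window Yj n N \<omega> = ys"
      by (auto simp: xs_def)
  qed
  moreover have "{\<omega>\<in>space Mi. window Yi 0 N \<omega> = ys} = {\<omega>\<in>space Mi. \<forall>k\<le>N. Yi k \<omega> = ys ! k}"
    using True by (simp add: window_eq_iff)
  moreover have "(\<Prod>k<n + N. P (xs k) (xs (Suc k)))
      = (\<Prod>k<n. P (s k) (s (Suc k))) * (\<Prod>k<N. P (ys ! k) (ys ! Suc k))"
    unfolding prod_lessThan_add[where f = "\<lambda>k. P (xs k) (xs (Suc k))"]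
    by (intro arg_cong2[where f = "(*)"] prod.cong) (use True sn in \<open>auto simp: xs_def\<close>)
  ultimately show ?thesis
    using mj mi True s0 unfolding markov_chain_from_def by (simp add: xs_def)
qed

text \<open>It is obtained by identifying the two measures on the countable set of windows.\<close>
lemma markov_transfer_integral:
  assumes mj: "markov_chain_from Mj Yj P j" and mi: "markov_chain_from Mi Yi P i"
    and s0: "s 0 = j" and sn: "s n = i" and Pnn: "\<And>a b. 0 \<le> P a b"
  shows "(\<integral>\<^sup>+\<omega>. indicator {\<omega>\<in>space Mj. \<forall>k\<le>n. Yj k \<omega> = s k} \<omega> * h (window Yj n N \<omega>) \<partial>Mj)
     = ennreal (\<Prod>k<n. P (s k) (s (Suc k))) * (\<integral>\<^sup>+\<omega>. h (window Yi 0 N \<omega>) \<partial>Mi)"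
proof -
  have pj: "prob_space Mj" and pi: "prob_space Mi"
    using mj mi unfolding markov_chain_from_def by auto
  have Yj[measurable]: "\<And>k. Yj k \<in> measurable Mj (count_space UNIV)"
    and Yi[measurable]: "\<And>k. Yi k \<in> measurable Mi (count_space UNIV)"
    using mj mi unfolding markov_chain_from_def by auto
  define Pre where "Pre = {\<omega>\<in>space Mj. \<forall>k\<le>n. Yj k \<omega> = s k}"
  define c where "c = (\<Prod>k<n. P (s k) (s (Suc k)))"
  have "0 \<le> c" unfolding c_def by (rule prod_nonneg) (use Pnn in auto)
  have [measurable]: "window Yj n N \<in> measurable Mj (count_space UNIV)"
    "window Yi 0 N \<in> measurable Mi (count_space UNIV)"
    by (rule window_measurable, fact)+
  have [measurable]: "Pre \<in> sets Mj" unfolding Pre_def by measurable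
  define \<nu>j where "\<nu>j = distr (density Mj (indicator Pre)) (count_space UNIV) (window Yj n N)"
  define \<nu>i where "\<nu>i = density (distr Mi (count_space UNIV) (window Yi 0 N)) (\<lambda>_. ennreal c)"
  have "\<nu>j = \<nu>i"
  proof (rule measure_eqI_countable[where A = UNIV])
    show "sets \<nu>j = Pow UNIV" "sets \<nu>i = Pow UNIV" by (simp_all add: \<nu>j_def \<nu>i_def)
  next
    fix ys :: "nat list"
    have "emeasure \<nu>j {ys} = emeasure (density Mj (indicator Pre)) (window Yj n N -` {ys} \<inter> space Mj)"
      unfolding \<nu>j_def by (subst emeasure_distr) auto
    also have "\<dots> = (\<integral>\<^sup>+\<omega>. indicator Pre \<omega> * indicator (window Yj n N -` {ys} \<inter> space Mj) \<omega> \<partial>Mj)"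
      by (subst emeasure_density) (auto intro: measurable_sets)
    also have "\<dots> = (\<integral>\<^sup>+\<omega>. indicator (Pre \<inter> (window Yj n N -` {ys} \<inter> space Mj)) \<omega> \<partial>Mj)"
      by (simp add: indicator_inter_arith)
    also have "\<dots> = emeasure Mj (Pre \<inter> (window Yj n N -` {ys} \<inter> space Mj))"
      by (rule nn_integral_indicator) (auto intro: measurable_sets)
    also have "Pre \<inter> (window Yj n N -` {ys} \<inter> space Mj) =
        {\<omega>\<in>space Mj. (\<forall>k\<le>n. Yj k \<omega> = s k) \<and> window Yj n N \<omega> = ys}"
      by (auto simp: Pre_def)
    also have "emeasure Mj \<dots> = ennreal c * emeasure Mi {\<omega>\<in>space Mi. window Yi 0 N \<omega> = ys}"
      using markov_cylinder_measure[OF mj mi s0 sn, of N ys] \<open>0 \<le> c\<close>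
      by (simp add: c_def ennreal_mult
          finite_measure.emeasure_eq_measure[OF prob_space.axioms(1)[OF pj]]
          finite_measure.emeasure_eq_measure[OF prob_space.axioms(1)[OF pi]])
    also have "{\<omega>\<in>space Mi. window Yi 0 N \<omega> = ys} = window Yi 0 N -` {ys} \<inter> space Mi"
      by auto
    also have "ennreal c * emeasure Mi \<dots> = emeasure \<nu>i {ys}"
      unfolding \<nu>i_def
      by (subst emeasure_density) (auto simp: nn_integral_cmult_indicator emeasure_distr)
    finally show "emeasure \<nu>j {ys} = emeasure \<nu>i {ys}" .
  qed simp
  have "(\<integral>\<^sup>+ys. h ys \<partial>\<nu>j) = (\<integral>\<^sup>+\<omega>. indicator Pre \<omega> * h (window Yj n N \<omega>) \<partial>Mj)"
    unfolding \<nu>j_def by (simp add: nn_integral_distr nn_integral_density)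
  moreover have "(\<integral>\<^sup>+ys. h ys \<partial>\<nu>i) = ennreal c * (\<integral>\<^sup>+\<omega>. h (window Yi 0 N \<omega>) \<partial>Mi)"
    unfolding \<nu>i_def by (simp add: nn_integral_density nn_integral_distr nn_integral_cmult)
  ultimately show ?thesis using \<open>\<nu>j = \<nu>i\<close> by (simp add: Pre_def c_def)
qed

lemma lower_prod_integral_transfer:
  assumes mj: "markov_chain_from Mj Yj P j" and mi: "markov_chain_from Mi Yi P i"
    and s0: "s 0 = j" and sn: "s n = i" and Pnn: "\<And>a b. 0 \<le> P a b"
  shows "lower_prod r s n * ennreal (\<Prod>k<n. P (s k) (s (Suc k)))
           * (\<integral>\<^sup>+\<omega>. lower_prod r (\<lambda>m. Yi m \<omega>) K \<partial>Mi)
         \<le> (\<integral>\<^sup>+\<omega>. lower_prod r (\<lambda>m. Yj m \<omega>) (n + K) \<partial>Mj)"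
proof -
  have [measurable]: "\<And>k. Yj k \<in> measurable Mj (count_space UNIV)"
    using mj unfolding markov_chain_from_def by auto
  define Pre where "Pre = {\<omega>\<in>space Mj. \<forall>k\<le>n. Yj k \<omega> = s k}"
  define h where "h ys = (\<Prod>k<K. ennreal (min (r (ys ! k)) 1))" for ys
  have h_window: "h (window Y m K \<omega>) = lower_prod r (\<lambda>k. Y (m + k) \<omega>) K" for Y m \<omega>
    by (simp add: h_def lower_prod_def nth_window)
  have [measurable]: "Pre \<in> sets Mj" unfolding Pre_def by measurable
  have [measurable]: "(\<lambda>\<omega>. h (window Yj n K \<omega>)) \<in> borel_measurable Mj"
    by (rule measurable_compose_count_space[OF window_measurable]) auto
  have "lower_prod r s n * ennreal (\<Prod>k<n. P (s k) (s (Suc k)))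
           * (\<integral>\<^sup>+\<omega>. lower_prod r (\<lambda>m. Yi m \<omega>) K \<partial>Mi)
      = lower_prod r s n * (\<integral>\<^sup>+\<omega>. indicator Pre \<omega> * h (window Yj n K \<omega>) \<partial>Mj)"
    using markov_transfer_integral[OF mj mi s0 sn Pnn, of h K]
    by (simp add: Pre_def h_window mult.assoc)
  also have "\<dots> = (\<integral>\<^sup>+\<omega>. lower_prod r s n * (indicator Pre \<omega> * h (window Yj n K \<omega>)) \<partial>Mj)"
    by (rule nn_integral_cmult[symmetric]) measurable
  also have "\<dots> \<le> (\<integral>\<^sup>+\<omega>. lower_prod r (\<lambda>m. Yj m \<omega>) (n + K) \<partial>Mj)"
  proof (rule nn_integral_mono)
    fix \<omega> assume "\<omega> \<in> space Mj"
    show "lower_prod r s n * (indicator Pre \<omega> * h (window Yj n K \<omega>))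
          \<le> lower_prod r (\<lambda>m. Yj m \<omega>) (n + K)"
    proof (cases "\<omega> \<in> Pre")
      case True
      then have "lower_prod r (\<lambda>m. Yj m \<omega>) n = lower_prod r s n"
        unfolding lower_prod_def by (intro prod.cong) (auto simp: Pre_def)
      with True show ?thesis by (simp add: lower_prod_add h_window)
    qed simp
  qed
  finally show ?thesis .
qed

lemma INF_lower_prod_integral_transfer:
  assumes mj: "markov_chain_from Mj Yj P j" and mi: "markov_chain_from Mi Yi P i"
    and s0: "s 0 = j" and sn: "s n = i" and Pnn: "\<And>a b. 0 \<le> P a b"
  shows "lower_prod r s n * ennreal (\<Prod>k<n. P (s k) (s (Suc k)))
           * (INF K. \<integral>\<^sup>+\<omega>. lower_prod r (\<lambda>m. Yi m \<omega>) K \<partial>Mi)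
         \<le> (INF K. \<integral>\<^sup>+\<omega>. lower_prod r (\<lambda>m. Yj m \<omega>) K \<partial>Mj)"
proof (rule INF_greatest)
  fix K
  have "lower_prod r s n * ennreal (\<Prod>k<n. P (s k) (s (Suc k)))
           * (INF K. \<integral>\<^sup>+\<omega>. lower_prod r (\<lambda>m. Yi m \<omega>) K \<partial>Mi)
      \<le> lower_prod r s n * ennreal (\<Prod>k<n. P (s k) (s (Suc k)))
           * (\<integral>\<^sup>+\<omega>. lower_prod r (\<lambda>m. Yi m \<omega>) K \<partial>Mi)"
    by (intro mult_left_mono INF_lower) auto
  also have "\<dots> \<le> (\<integral>\<^sup>+\<omega>. lower_prod r (\<lambda>m. Yj m \<omega>) (n + K) \<partial>Mj)"
    by (rule lower_prod_integral_transfer[OF mj mi s0 sn Pnn])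
  also have "\<dots> \<le> (\<integral>\<^sup>+\<omega>. lower_prod r (\<lambda>m. Yj m \<omega>) K \<partial>Mj)"
    by (intro nn_integral_mono) (use lower_prod_decseq[of r] in \<open>auto simp: decseq_def\<close>)
  finally show "lower_prod r s n * ennreal (\<Prod>k<n. P (s k) (s (Suc k)))
           * (INF K. \<integral>\<^sup>+\<omega>. lower_prod r (\<lambda>m. Yi m \<omega>) K \<partial>Mi)
      \<le> (\<integral>\<^sup>+\<omega>. lower_prod r (\<lambda>m. Yj m \<omega>) K \<partial>Mj)" .
qed

section \<open>Paths from irreducibility\<close>

lemma kpow_pos_imp_path:
  "kpow Q n a b > 0 \<Longrightarrow> \<exists>s. s 0 = a \<and> s n = b \<and> (\<forall>k<n. Q (s k) (s (Suc k)) > 0)"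
proof (induction n arbitrary: b)
  case 0
  then show ?case by (auto split: if_splits intro!: exI[of _ "\<lambda>_. a"])
next
  case (Suc n)
  have "\<exists>k. kpow Q n a k * ennreal (Q k b) \<noteq> 0"
  proof (rule ccontr)
    assume "\<not> ?thesis"
    then have "(\<lambda>k. kpow Q n a k * ennreal (Q k b)) = (\<lambda>_. 0)" by auto
    then have "kpow Q (Suc n) a b = 0" by simp
    with Suc.prems show False by simp
  qed
  then obtain k where "kpow Q n a k > 0" and "Q k b > 0"
    by (auto simp: ennreal_eq_0_iff zero_less_iff_neq_zero)
  moreover from Suc.IH[OF this(1)] obtain s
    where "s 0 = a" "s n = k" "\<forall>m<n. Q (s m) (s (Suc m)) > 0" by blast
  ultimately show ?case
    by (intro exI[of _ "s(Suc n := b)"]) (auto simp: less_Suc_eq)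
qed

lemma irreducible_positive_path:
  assumes kernel: "nonneg_kernel Q" and irred: "irreducible_kernel Q"
  obtains n s where "s 0 = j" "s n = i" "(\<Prod>k<n. stoch Q (s k) (s (Suc k))) > 0"
proof -
  from irred obtain n where "kpow Q n j i > 0" unfolding irreducible_kernel_def by blast
  from kpow_pos_imp_path[OF this] obtain s
    where "s 0 = j" "s n = i" "\<forall>k<n. Q (s k) (s (Suc k)) > 0" by blast
  moreover have "\<And>k. rowmass Q k > 0" using kernel unfolding nonneg_kernel_def by auto
  ultimately show ?thesis
    by (intro that[of s n] prod_pos) (auto simp: stoch_def)
qed

theorem proposition1:
  fixes Q :: "nat \<Rightarrow> nat \<Rightarrow> real"
    and M :: "nat \<Rightarrow> 'a measure"
    and X :: "nat \<Rightarrow> nat \<Rightarrow> 'a \<Rightarrow> nat"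
  assumes kernel: "nonneg_kernel Q"
    and irred: "irreducible_kernel Q"
    and chain: "\<And>i. markov_chain_from (M i) (X i) (stoch Q) i"
    and C: "condC Q M X"
    and pos: "fval Q M X i > 0"
  shows "fval Q M X j > 0"
proof -
  define r where "r = rowmass Q"
  define I where "I l = (INF N. \<integral>\<^sup>+\<omega>. lower_prod r (\<lambda>n. X l n \<omega>) N \<partial>M l)" for l
  have f_zero: "fval Q M X l = 0 \<longleftrightarrow> I l = 0" for l
    unfolding I_def r_def by (rule fval_eq_0_iff[OF kernel chain C])
  obtain n s where s0: "s 0 = j" and sn: "s n = i"
    and weight: "(\<Prod>k<n. stoch Q (s k) (s (Suc k))) > 0"
    using irreducible_positive_path[OF kernel irred] .
  have "\<And>a b. 0 \<le> stoch Q a b"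
    using kernel unfolding nonneg_kernel_def stoch_def by (auto intro: divide_nonneg_pos)
  then have "lower_prod r s n * ennreal (\<Prod>k<n. stoch Q (s k) (s (Suc k))) * I i \<le> I j"
    unfolding I_def by (rule INF_lower_prod_integral_transfer[OF chain chain s0 sn])
  moreover have "lower_prod r s n \<noteq> 0"
    using kernel unfolding r_def nonneg_kernel_def by (intro lower_prod_pos) auto
  moreover have "I i \<noteq> 0" using pos f_zero[of i] by auto
  ultimately have "I j \<noteq> 0" using weight by (auto simp: ennreal_eq_0_iff not_le)
  then show ?thesis using f_zero[of j] by (simp add: zero_less_iff_neq_zero)
qed

end
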